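(* Let $1<S\le N$, $L$ a band-width vector, $\dot W$ an $L$-admissible matrix, $W_\varepsilon=\mathrm{Id}+\varepsilon\dot W$, $k\in\mathbb N$, $\beta\in\Gamma$, $D_\beta=D_{k,\beta,L}$ and $P_{\varepsilon,\beta}=D_\beta W_\varepsilon$. For all sufficiently small $\varepsilon>0$ let $f^{(1)}_\varepsilon,\dots,f^{(N)}_\varepsilon$ be a unit-norm eigenbasis of $P_{\varepsilon,\beta}$. Then for all $1\le\ell\ne m\le N$ and all sufficiently small $\varepsilon>0$, $\langle f^{(\ell)}_\varepsilon,D_\beta\overline{f^{(m)}_\varepsilon}\rangle=0$.
   Context: A band-width vector is $L=(L_1,\dots,L_S)$ of positive integers with $\sum_sL_s=N$; $N_0=0$, $N_s=N_{s-1}+L_s$, $B_s=\{j:N_{s-1}<j\le N_s\}$. $D_{k,\beta,L}$ is the diagonal matrix with $j$-th entry $e^{-2\pi ik\beta_s}$ for $j\in B_s$. $\dot W$ is $L$-admissible if it is real symmetric and (1) $\dot W_{ij}\ge0$ for $i\ne j$, $\sum_j\dot W_{ij}=0$ for all $i$; (2) $\dot W$ has $N$ distinct eigenvalues; (3) each $\hat W_s=(\dot W_{jk})_{j,k\in B_s}$ has $L_s$ distinct eigenvalues. $\Gamma=\{\beta\in\mathbb R^S: e^{-2\pi ik\beta_{s_1}}\neq e^{-2\pi ik\beta_{s_2}}\text{ for all }k\ne0,\ s_1\ne s_2\}$. $\overline v$ is entrywise conjugation and $\langle v,w\rangle=\sum_jv_j\overline{w_j}$. *)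

theory Defs
  imports Complex_Main
begin

text \<open>Conventions: vectors and matrices of size N are functions on indices 1..N
 (nat => 'a and nat => nat => 'a); blocks are indexed s = 1..S.\<close>

definition band_width :: "nat \<Rightarrow> nat \<Rightarrow> (nat \<Rightarrow> nat) \<Rightarrow> bool" where
  "band_width S N L \<longleftrightarrow> (\<forall>s\<in>{1..S}. 0 < L s) \<and> (\<Sum>s=1..S. L s) = N"

definition Ncum :: "(nat \<Rightarrow> nat) \<Rightarrow> nat \<Rightarrow> nat" where
  "Ncum L s = (\<Sum>t=1..s. L t)"

definition blk :: "(nat \<Rightarrow> nat) \<Rightarrow> nat \<Rightarrow> nat set" where
  "blk L s = {j. Ncum L (s - 1) < j \<and> j \<le> Ncum L s}"

definition is_eigenvalue_on :: "nat set \<Rightarrow> (nat \<Rightarrow> nat \<Rightarrow> 'a::field) \<Rightarrow> 'a \<Rightarrow> bool" where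
  "is_eigenvalue_on I A x \<longleftrightarrow>
     (\<exists>v. (\<exists>j\<in>I. v j \<noteq> 0) \<and> (\<forall>i\<in>I. (\<Sum>j\<in>I. A i j * v j) = x * v i))"

definition admissible :: "nat \<Rightarrow> nat \<Rightarrow> (nat \<Rightarrow> nat) \<Rightarrow> (nat \<Rightarrow> nat \<Rightarrow> real) \<Rightarrow> bool" where
  "admissible S N L Wd \<longleftrightarrow>
     (\<forall>i\<in>{1..N}. \<forall>j\<in>{1..N}. Wd i j = Wd j i) \<and>
     (\<forall>i\<in>{1..N}. \<forall>j\<in>{1..N}. i \<noteq> j \<longrightarrow> 0 \<le> Wd i j) \<and>
     (\<forall>i\<in>{1..N}. (\<Sum>j=1..N. Wd i j) = 0) \<and>
     card {x. is_eigenvalue_on {1..N} Wd x} = N \<and>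
     (\<forall>s\<in>{1..S}. card {x. is_eigenvalue_on (blk L s) Wd x} = L s)"

definition Gamma :: "nat \<Rightarrow> (nat \<Rightarrow> real) set" where
  "Gamma S = {\<beta>. \<forall>k::int. k \<noteq> 0 \<longrightarrow> (\<forall>s1\<in>{1..S}. \<forall>s2\<in>{1..S}. s1 \<noteq> s2 \<longrightarrow>
       exp (- 2 * of_real pi * \<i> * of_int k * of_real (\<beta> s1))
     \<noteq> exp (- 2 * of_real pi * \<i> * of_int k * of_real (\<beta> s2)))}"

definition Ddiag :: "nat \<Rightarrow> nat \<Rightarrow> (nat \<Rightarrow> real) \<Rightarrow> (nat \<Rightarrow> nat) \<Rightarrow> nat \<Rightarrow> complex" where
  "Ddiag S k \<beta> L j =
     (\<Sum>s=1..S. if j \<in> blk L s then exp (- 2 * of_real pi * \<i> * of_nat k * of_real (\<beta> s)) else 0)"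

definition Pmat :: "nat \<Rightarrow> nat \<Rightarrow> (nat \<Rightarrow> real) \<Rightarrow> (nat \<Rightarrow> nat) \<Rightarrow> (nat \<Rightarrow> nat \<Rightarrow> real)
                    \<Rightarrow> real \<Rightarrow> nat \<Rightarrow> nat \<Rightarrow> complex" where
  "Pmat S k \<beta> L Wd \<epsilon> i j =
     Ddiag S k \<beta> L i * of_real ((if i = j then 1 else 0) + \<epsilon> * Wd i j)"

definition unit_eigenbasis :: "nat \<Rightarrow> (nat \<Rightarrow> nat \<Rightarrow> complex) \<Rightarrow> (nat \<Rightarrow> nat \<Rightarrow> complex) \<Rightarrow> bool" where
  "unit_eigenbasis N A f \<longleftrightarrow>
     (\<forall>l\<in>{1..N}. (\<Sum>j=1..N. (cmod (f l j))^2) = 1) \<and>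
     (\<forall>l\<in>{1..N}. \<exists>\<mu>. \<forall>i\<in>{1..N}. (\<Sum>j=1..N. A i j * f l j) = \<mu> * f l i) \<and>
     (\<forall>c. (\<forall>j\<in>{1..N}. (\<Sum>l=1..N. c l * f l j) = 0) \<longrightarrow> (\<forall>l\<in>{1..N}. c l = 0))"

definition cinner :: "nat \<Rightarrow> (nat \<Rightarrow> complex) \<Rightarrow> (nat \<Rightarrow> complex) \<Rightarrow> complex" where
  "cinner N v w = (\<Sum>j=1..N. v j * cnj (w j))"

end

theory Submission
  imports Defs "Jordan_Normal_Form.Determinant"
begin

(* Since D^-1 P = Id + eps W is symmetric, eigenvectors x, y of P = D (Id + eps W) for distinct
   eigenvalues satisfy sum_j x_j conj(D_j) y_j = 0, which is the claimed identity. It therefore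
   suffices that for small eps every eigenspace of P is one-dimensional.

   An eigenvalue mu of P lies within O(eps) of a diagonal value d of D. On the cluster C of
   indices j with D_j = d, the eigenvector equation makes (mu/d - 1)/eps an approximate eigenvalue
   of W restricted to C, while off C the eigenvector is O(eps) small. The clusters are the whole
   index range (k = 0) or single blocks (beta in Gamma), so admissibility gives W a simple
   spectrum on each of them, and the resulting spectral gap forces an eigenvector of P to be
   determined by its component along one eigenvector of W on C. *)

lemma finite_ex_maximizer:
  fixes f :: "'a \<Rightarrow> 'b::linorder"
  assumes "finite A" "A \<noteq> {}"
  obtains j where "j \<in> A" "\<And>i. i \<in> A \<Longrightarrow> f i \<le> f j"
proof -
  have "Max (f ` A) \<in> f ` A" using assms by simp
  then obtain j where "j \<in> A" "f j = Max (f ` A)" by auto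
  with assms that show thesis by simp
qed

lemma finite_positive_lower_bound:
  fixes f :: "'a \<Rightarrow> real"
  assumes "finite A" "\<And>x. x \<in> A \<Longrightarrow> 0 < f x"
  obtains \<gamma> where "0 < \<gamma>" "\<And>x. x \<in> A \<Longrightarrow> \<gamma> \<le> f x"
proof
  show "0 < Min (insert 1 (f ` A))" using assms by simp
  show "Min (insert 1 (f ` A)) \<le> f x" if "x \<in> A" for x using assms that by simp
qed

subsection \<open>Orthonormal eigenbases of real symmetric matrices\<close>

lemma orthonormal_rows_imp_orthonormal_columns:
  fixes e :: "nat \<Rightarrow> 'a \<Rightarrow> real"
  assumes fin: "finite C"
    and orth: "\<And>i j. i < card C \<Longrightarrow> j < card C \<Longrightarrow> (\<Sum>a\<in>C. e i a * e j a) = (if i = j then 1 else 0)"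
    and "a \<in> C" "b \<in> C"
  shows "(\<Sum>i<card C. e i a * e i b) = (if a = b then 1 else 0)"
proof -
  let ?n = "card C"
  obtain h where h: "bij_betw h {0..<?n} C" using ex_bij_betw_nat_finite[OF fin] by blast
  define A :: "real mat" where "A = mat ?n ?n (\<lambda>(i, k). e i (h k))"
  have A: "A \<in> carrier_mat ?n ?n" and AT: "transpose_mat A \<in> carrier_mat ?n ?n"
    unfolding A_def by simp_all
  have "A * transpose_mat A = 1\<^sub>m ?n"
  proof (rule eq_matI)
    fix i j assume i: "i < dim_row (1\<^sub>m ?n)" and j: "j < dim_col (1\<^sub>m ?n)"
    have "(A * transpose_mat A) $$ (i, j) = (\<Sum>k<?n. e i (h k) * e j (h k))"
      using i j unfolding A_def by (auto simp: scalar_prod_def lessThan_atLeast0 intro!: sum.cong)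
    also have "\<dots> = (\<Sum>a\<in>C. e i a * e j a)"
      using sum.reindex_bij_betw[OF h, of "\<lambda>a. e i a * e j a"] by (simp add: lessThan_atLeast0)
    also have "\<dots> = 1\<^sub>m ?n $$ (i, j)" using orth i j by simp
    finally show "(A * transpose_mat A) $$ (i, j) = 1\<^sub>m ?n $$ (i, j)" .
  qed (auto simp: A_def)
  then have TA: "transpose_mat A * A = 1\<^sub>m ?n"
    by (rule mat_mult_left_right_inverse[OF A AT])
  obtain k where k: "k < ?n" "h k = a" using h \<open>a \<in> C\<close> unfolding bij_betw_def by force
  obtain l where l: "l < ?n" "h l = b" using h \<open>b \<in> C\<close> unfolding bij_betw_def by force
  have "(\<Sum>i<?n. e i a * e i b) = (transpose_mat A * A) $$ (k, l)"
    using k l unfolding A_def by (auto simp: scalar_prod_def lessThan_atLeast0 intro!: sum.cong)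
  also have "\<dots> = (if a = b then 1 else 0)"
    using TA h k l unfolding bij_betw_def inj_on_def by auto
  finally show ?thesis .
qed

lemma symmetric_eigvecs_orthogonal:
  fixes W :: "'a \<Rightarrow> 'a \<Rightarrow> real"
  assumes sym: "\<And>a b. a \<in> C \<Longrightarrow> b \<in> C \<Longrightarrow> W a b = W b a"
    and u: "\<And>a. a \<in> C \<Longrightarrow> (\<Sum>b\<in>C. W a b * u b) = \<alpha> * u a"
    and v: "\<And>a. a \<in> C \<Longrightarrow> (\<Sum>b\<in>C. W a b * v b) = \<kappa> * v a"
    and "\<alpha> \<noteq> \<kappa>"
  shows "(\<Sum>a\<in>C. u a * v a) = 0"
proof -
  have "\<alpha> * (\<Sum>a\<in>C. u a * v a) = (\<Sum>a\<in>C. (\<Sum>b\<in>C. W a b * u b) * v a)"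
    using u by (simp add: sum_distrib_left mult.assoc)
  also have "\<dots> = (\<Sum>a\<in>C. \<Sum>b\<in>C. W a b * u b * v a)"
    by (simp add: sum_distrib_right)
  also have "\<dots> = (\<Sum>b\<in>C. \<Sum>a\<in>C. W a b * u b * v a)"
    by (rule sum.swap)
  also have "\<dots> = (\<Sum>b\<in>C. u b * (\<Sum>a\<in>C. W b a * v a))"
    using sym by (auto simp: sum_distrib_left mult_ac intro!: sum.cong)
  also have "\<dots> = \<kappa> * (\<Sum>a\<in>C. u a * v a)"
    using v by (simp add: sum_distrib_left mult_ac)
  finally have "(\<alpha> - \<kappa>) * (\<Sum>a\<in>C. u a * v a) = 0"
    by (simp add: algebra_simps)
  with \<open>\<alpha> \<noteq> \<kappa>\<close> show ?thesis by simp
qed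

lemma exists_unit_eigvec:
  fixes W :: "nat \<Rightarrow> nat \<Rightarrow> real"
  assumes "finite C" "is_eigenvalue_on C W x"
  shows "\<exists>u. (\<forall>a\<in>C. (\<Sum>b\<in>C. W a b * u b) = x * u a) \<and> (\<Sum>a\<in>C. (u a)\<^sup>2) = 1"
proof -
  obtain v j where v: "\<And>a. a \<in> C \<Longrightarrow> (\<Sum>b\<in>C. W a b * v b) = x * v a"
    and j: "j \<in> C" "v j \<noteq> 0"
    using assms(2) unfolding is_eigenvalue_on_def by blast
  define r where "r = sqrt (\<Sum>a\<in>C. (v a)\<^sup>2)"
  have "0 < (v j)\<^sup>2" using j by simp
  also have "\<dots> \<le> (\<Sum>a\<in>C. (v a)\<^sup>2)" using assms(1) j by (intro member_le_sum) auto
  finally have pos: "0 < (\<Sum>a\<in>C. (v a)\<^sup>2)" .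
  then have r: "0 < r" "r\<^sup>2 = (\<Sum>a\<in>C. (v a)\<^sup>2)" unfolding r_def by simp_all
  have "\<forall>a\<in>C. (\<Sum>b\<in>C. W a b * (v b / r)) = x * (v a / r)"
    using v by (simp add: sum_divide_distrib[symmetric])
  moreover have "(\<Sum>a\<in>C. (v a / r)\<^sup>2) = 1"
    using r pos by (simp add: power_divide sum_divide_distrib[symmetric])
  ultimately show ?thesis by (intro exI[where x = "\<lambda>b. v b / r"]) simp
qed

lemma symmetric_simple_spectrum_orthonormal_eigenbasis:
  fixes W :: "nat \<Rightarrow> nat \<Rightarrow> real"
  assumes fin: "finite C" and sym: "\<And>a b. a \<in> C \<Longrightarrow> b \<in> C \<Longrightarrow> W a b = W b a"
    and simple: "card {x. is_eigenvalue_on C W x} = card C"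
  obtains e lam where "\<And>i a. i < card C \<Longrightarrow> a \<in> C \<Longrightarrow> (\<Sum>b\<in>C. W a b * e i b) = lam i * e i a"
    and "inj_on lam {..<card C}"
    and "\<And>a b. a \<in> C \<Longrightarrow> b \<in> C \<Longrightarrow> (\<Sum>i<card C. e i a * e i b) = (if a = b then 1 else 0)"
proof (cases "C = {}")
  case True
  then show thesis using that by simp
next
  case False
  let ?n = "card C" and ?E = "{x. is_eigenvalue_on C W x}"
  have "finite ?E" using simple fin False card_ge_0_finite by force
  then obtain lam where lam: "bij_betw lam {..<?n} ?E"
    using ex_bij_betw_nat_finite simple by (metis lessThan_atLeast0)
  have "\<forall>i. \<exists>u. i < ?n \<longrightarrow> (\<forall>a\<in>C. (\<Sum>b\<in>C. W a b * u b) = lam i * u a) \<and> (\<Sum>a\<in>C. (u a)\<^sup>2) = 1"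
    using exists_unit_eigvec[OF fin] lam unfolding bij_betw_def by blast
  then obtain e where eig: "\<And>i a. i < ?n \<Longrightarrow> a \<in> C \<Longrightarrow> (\<Sum>b\<in>C. W a b * e i b) = lam i * e i a"
    and unit: "\<And>i. i < ?n \<Longrightarrow> (\<Sum>a\<in>C. (e i a)\<^sup>2) = 1"
    by metis
  have inj: "inj_on lam {..<?n}" using lam by (rule bij_betw_imp_inj_on)
  have orth: "(\<Sum>a\<in>C. e i a * e j a) = (if i = j then 1 else 0)" if "i < ?n" "j < ?n" for i j
  proof (cases "i = j")
    case True
    then show ?thesis using unit that by (simp add: power2_eq_square)
  next
    case False
    then have "lam i \<noteq> lam j" using inj that by (auto dest: inj_onD)
    with False show ?thesis
      using symmetric_eigvecs_orthogonal[OF sym, where u = "e i" and \<alpha> = "lam i" and v = "e j" and \<kappa> = "lam j"] eig that by simp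
  qed
  show thesis
    using that[OF eig inj orthonormal_rows_imp_orthonormal_columns[OF fin orth]] by blast
qed

subsection \<open>Eigenvectors of a unimodular diagonal times a perturbed identity\<close>

definition perturbed_eigvec ::
    "nat set \<Rightarrow> (nat \<Rightarrow> complex) \<Rightarrow> (nat \<Rightarrow> nat \<Rightarrow> real) \<Rightarrow> real \<Rightarrow> complex \<Rightarrow> (nat \<Rightarrow> complex) \<Rightarrow> bool"
  where "perturbed_eigvec I D W \<epsilon> \<mu> v \<longleftrightarrow>
    (\<forall>i\<in>I. D i * (v i + of_real \<epsilon> * (\<Sum>j\<in>I. of_real (W i j) * v j)) = \<mu> * v i)"

text \<open>A crude bound for the maximum-norm operator norm of \<open>W\<close>; the \<open>+ 1\<close> keeps it positive.\<close>
definition Wnorm :: "nat set \<Rightarrow> (nat \<Rightarrow> nat \<Rightarrow> real) \<Rightarrow> real"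
  where "Wnorm I W = (\<Sum>i\<in>I. \<Sum>j\<in>I. \<bar>W i j\<bar>) + 1"

definition cluster :: "nat set \<Rightarrow> (nat \<Rightarrow> complex) \<Rightarrow> complex \<Rightarrow> nat set"
  where "cluster I D d = {i\<in>I. D i = d}"

definition simple_eigenspaces_near ::
    "nat set \<Rightarrow> (nat \<Rightarrow> complex) \<Rightarrow> (nat \<Rightarrow> nat \<Rightarrow> real) \<Rightarrow> real \<Rightarrow> complex \<Rightarrow> bool"
  where "simple_eigenspaces_near I D W \<epsilon> d \<longleftrightarrow>
    (\<forall>\<mu> v w. perturbed_eigvec I D W \<epsilon> \<mu> v \<longrightarrow> perturbed_eigvec I D W \<epsilon> \<mu> w \<longrightarrow>
      cmod (\<mu> - d) \<le> \<epsilon> * Wnorm I W \<longrightarrow> (\<exists>j\<in>I. v j \<noteq> 0) \<longrightarrow> (\<exists>a. \<forall>i\<in>I. w i = a * v i))"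

definition simple_eigenspaces :: "nat set \<Rightarrow> (nat \<Rightarrow> complex) \<Rightarrow> (nat \<Rightarrow> nat \<Rightarrow> real) \<Rightarrow> real \<Rightarrow> bool"
  where "simple_eigenspaces I D W \<epsilon> \<longleftrightarrow>
    (\<forall>\<mu> v w. perturbed_eigvec I D W \<epsilon> \<mu> v \<longrightarrow> perturbed_eigvec I D W \<epsilon> \<mu> w \<longrightarrow>
      (\<exists>j\<in>I. v j \<noteq> 0) \<longrightarrow> (\<exists>a. \<forall>i\<in>I. w i = a * v i))"

lemma Wnorm_ge_1: "1 \<le> Wnorm I W"
  unfolding Wnorm_def by (simp add: sum_nonneg)

lemma perturbed_eigvec_lincomb:
  assumes "perturbed_eigvec I D W \<epsilon> \<mu> v" "perturbed_eigvec I D W \<epsilon> \<mu> w"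
  shows "perturbed_eigvec I D W \<epsilon> \<mu> (\<lambda>j. a * v j + b * w j)"
  unfolding perturbed_eigvec_def
proof
  fix i assume "i \<in> I"
  then have v: "D i * (v i + of_real \<epsilon> * (\<Sum>j\<in>I. of_real (W i j) * v j)) = \<mu> * v i"
    and w: "D i * (w i + of_real \<epsilon> * (\<Sum>j\<in>I. of_real (W i j) * w j)) = \<mu> * w i"
    using assms unfolding perturbed_eigvec_def by auto
  have "D i * (a * v i + b * w i + of_real \<epsilon> * (\<Sum>j\<in>I. of_real (W i j) * (a * v j + b * w j)))
     = a * (D i * (v i + of_real \<epsilon> * (\<Sum>j\<in>I. of_real (W i j) * v j)))
       + b * (D i * (w i + of_real \<epsilon> * (\<Sum>j\<in>I. of_real (W i j) * w j)))"
    by (simp add: algebra_simps sum.distrib sum_distrib_left)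
  also have "\<dots> = \<mu> * (a * v i + b * w i)"
    unfolding v w by (simp add: algebra_simps)
  finally show "D i * (a * v i + b * w i + of_real \<epsilon> * (\<Sum>j\<in>I. of_real (W i j) * (a * v j + b * w j)))
     = \<mu> * (a * v i + b * w i)" .
qed

locale unimodular_perturbation =
  fixes I :: "nat set" and D :: "nat \<Rightarrow> complex" and W :: "nat \<Rightarrow> nat \<Rightarrow> real"
  assumes finite_I: "finite I"
    and norm_D: "\<And>i. i \<in> I \<Longrightarrow> cmod (D i) = 1"
    and W_sym: "\<And>a b. a \<in> I \<Longrightarrow> b \<in> I \<Longrightarrow> W a b = W b a"
begin

lemma norm_row_sum_le:
  assumes "i \<in> I" "J \<subseteq> I" "0 \<le> m" "\<And>j. j \<in> J \<Longrightarrow> cmod (z j) \<le> m"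
  shows "cmod (\<Sum>j\<in>J. of_real (W i j) * z j) \<le> Wnorm I W * m"
proof -
  have "cmod (\<Sum>j\<in>J. of_real (W i j) * z j) \<le> (\<Sum>j\<in>J. \<bar>W i j\<bar> * m)"
    using assms(4) by (intro order.trans[OF norm_sum] sum_mono) (auto simp: norm_mult intro: mult_left_mono)
  also have "\<dots> \<le> (\<Sum>j\<in>I. \<bar>W i j\<bar>) * m"
    using assms(2,3) finite_I by (auto simp: sum_distrib_right intro: sum_mono2)
  also have "\<dots> \<le> (\<Sum>i\<in>I. \<Sum>j\<in>I. \<bar>W i j\<bar>) * m"
    using assms(1,3) finite_I by (intro mult_right_mono member_le_sum) (auto simp: sum_nonneg)
  also have "\<dots> \<le> Wnorm I W * m"
    using assms(3) unfolding Wnorm_def by (intro mult_right_mono) auto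
  finally show ?thesis .
qed

lemma perturbed_eigvec_defect_le:
  assumes v: "perturbed_eigvec I D W \<epsilon> \<mu> v" and "0 \<le> \<epsilon>" "i \<in> I"
    and m: "\<And>j. j \<in> I \<Longrightarrow> cmod (v j) \<le> m"
  shows "cmod (D i - \<mu>) * cmod (v i) \<le> \<epsilon> * Wnorm I W * m"
proof -
  have "0 \<le> m" using m[OF \<open>i \<in> I\<close>] norm_ge_zero order_trans by blast
  let ?S = "\<Sum>j\<in>I. of_real (W i j) * v j"
  have "D i * (v i + of_real \<epsilon> * ?S) = \<mu> * v i"
    using v \<open>i \<in> I\<close> unfolding perturbed_eigvec_def by auto
  then have "(D i - \<mu>) * v i = - (D i * of_real \<epsilon> * ?S)"
    by (simp add: algebra_simps)
  then have "cmod ((D i - \<mu>) * v i) = cmod (D i * of_real \<epsilon> * ?S)"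
    by simp
  then have "cmod (D i - \<mu>) * cmod (v i) = \<epsilon> * cmod ?S"
    using norm_D \<open>0 \<le> \<epsilon>\<close> \<open>i \<in> I\<close> by (simp add: norm_mult)
  also have "\<dots> \<le> \<epsilon> * (Wnorm I W * m)"
    using norm_row_sum_le[OF \<open>i \<in> I\<close> order_refl \<open>0 \<le> m\<close>, where z = v] m \<open>0 \<le> \<epsilon>\<close>
    by (intro mult_left_mono) auto
  finally show ?thesis by simp
qed

lemma perturbed_eigenvalue_near_diagonal:
  assumes v: "perturbed_eigvec I D W \<epsilon> \<mu> v" and "0 \<le> \<epsilon>" and "\<exists>j\<in>I. v j \<noteq> 0"
  shows "\<exists>i\<in>I. cmod (\<mu> - D i) \<le> \<epsilon> * Wnorm I W"
proof -
  obtain i where i: "i \<in> I" and max: "\<And>j. j \<in> I \<Longrightarrow> cmod (v j) \<le> cmod (v i)"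
    using finite_ex_maximizer[OF finite_I, of "\<lambda>j. cmod (v j)"] assms(3) by blast
  have "0 < cmod (v i)"
    using assms(3) max by (meson norm_ge_zero order_less_le_trans zero_less_norm_iff)
  moreover have "cmod (D i - \<mu>) * cmod (v i) \<le> \<epsilon> * Wnorm I W * cmod (v i)"
    using perturbed_eigvec_defect_le[OF v \<open>0 \<le> \<epsilon>\<close> i max] .
  ultimately show ?thesis
    using i by (metis mult_le_cancel_right_pos norm_minus_commute)
qed

lemma perturbed_eigvec_far_le:
  assumes v: "perturbed_eigvec I D W \<epsilon> \<mu> v" and "0 \<le> \<epsilon>" and "0 < \<gamma>"
    and m: "\<And>j. j \<in> I \<Longrightarrow> cmod (v j) \<le> m"
    and \<mu>: "cmod (\<mu> - d) \<le> \<epsilon> * Wnorm I W" and small: "4 * \<epsilon> * Wnorm I W \<le> \<gamma>"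
    and "i \<in> I" and far: "\<gamma> \<le> cmod (D i - d)"
  shows "cmod (v i) \<le> 2 * \<epsilon> * Wnorm I W * m / \<gamma>"
proof -
  have "\<gamma> \<le> cmod (D i - \<mu>) + cmod (\<mu> - d)"
    using far norm_triangle_ineq[of "D i - \<mu>" "\<mu> - d"] by simp
  then have "\<gamma> / 2 \<le> cmod (D i - \<mu>)"
    using \<mu> small[unfolded mult.assoc] \<open>0 < \<gamma>\<close> by linarith
  then have "\<gamma> / 2 * cmod (v i) \<le> cmod (D i - \<mu>) * cmod (v i)"
    by (intro mult_right_mono) auto
  also have "\<dots> \<le> \<epsilon> * Wnorm I W * m"
    by (rule perturbed_eigvec_defect_le[OF v \<open>0 \<le> \<epsilon>\<close> \<open>i \<in> I\<close> m])
  finally show ?thesis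
    using \<open>0 < \<gamma>\<close> by (simp add: field_simps)
qed

lemma perturbed_eigvecs_biorthogonal:
  assumes x: "perturbed_eigvec I D W \<epsilon> \<mu>1 x" and y: "perturbed_eigvec I D W \<epsilon> \<mu>2 y"
    and "\<mu>1 \<noteq> \<mu>2"
  shows "(\<Sum>j\<in>I. x j * cnj (D j * cnj (y j))) = 0"
proof -
  have DD: "cnj (D j) * D j = 1" if "j \<in> I" for j
    using norm_D[OF that] complex_norm_square[of "D j"] by (simp add: mult.commute)
  define Q where "Q = (\<Sum>j\<in>I. x j * cnj (D j) * y j)"
  define T where "T = (\<Sum>j\<in>I. x j * y j) + of_real \<epsilon> * (\<Sum>j\<in>I. \<Sum>i\<in>I. of_real (W j i) * x i * y j)"
  have "\<mu>1 * Q = (\<Sum>j\<in>I. (cnj (D j) * D j) * ((x j + of_real \<epsilon> * (\<Sum>i\<in>I. of_real (W j i) * x i)) * y j))"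
    using x unfolding Q_def perturbed_eigvec_def
    by (auto simp: sum_distrib_left mult_ac intro!: sum.cong)
  also have "\<dots> = (\<Sum>j\<in>I. (x j + of_real \<epsilon> * (\<Sum>i\<in>I. of_real (W j i) * x i)) * y j)"
    using DD by simp
  also have "\<dots> = T"
    unfolding T_def by (simp add: algebra_simps sum.distrib sum_distrib_left sum_distrib_right)
  finally have Q1: "\<mu>1 * Q = T" .
  have "\<mu>2 * Q = (\<Sum>j\<in>I. (cnj (D j) * D j) * (x j * (y j + of_real \<epsilon> * (\<Sum>i\<in>I. of_real (W j i) * y i))))"
    using y unfolding Q_def perturbed_eigvec_def
    by (auto simp: sum_distrib_left mult_ac intro!: sum.cong)
  also have "\<dots> = (\<Sum>j\<in>I. x j * (y j + of_real \<epsilon> * (\<Sum>i\<in>I. of_real (W j i) * y i)))"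
    using DD by simp
  also have "\<dots> = (\<Sum>j\<in>I. x j * y j) + of_real \<epsilon> * (\<Sum>j\<in>I. \<Sum>i\<in>I. of_real (W j i) * x j * y i)"
    by (simp add: algebra_simps sum.distrib sum_distrib_left sum_distrib_right)
  also have "(\<Sum>j\<in>I. \<Sum>i\<in>I. of_real (W j i) * x j * y i) = (\<Sum>i\<in>I. \<Sum>j\<in>I. of_real (W j i) * x j * y i)"
    by (rule sum.swap)
  also have "(\<Sum>i\<in>I. \<Sum>j\<in>I. of_real (W j i) * x j * y i) = (\<Sum>j\<in>I. \<Sum>i\<in>I. of_real (W j i) * x i * y j)"
    using W_sym by (intro sum.cong refl) auto
  finally have Q2: "\<mu>2 * Q = T" unfolding T_def .
  from Q1 Q2 \<open>\<mu>1 \<noteq> \<mu>2\<close> have "Q = 0"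
    by (metis mult_cancel_right right_minus_eq)
  then show ?thesis unfolding Q_def by (simp add: mult.assoc)
qed

end

locale simple_cluster = unimodular_perturbation +
  fixes d :: complex and e :: "nat \<Rightarrow> nat \<Rightarrow> real" and lam :: "nat \<Rightarrow> real"
  assumes d_value: "d \<in> D ` I"
    and e_eigvec: "\<And>i a. i < card (cluster I D d) \<Longrightarrow> a \<in> cluster I D d \<Longrightarrow>
      (\<Sum>b\<in>cluster I D d. W a b * e i b) = lam i * e i a"
    and lam_inj: "inj_on lam {..<card (cluster I D d)}"
    and e_complete: "\<And>a b. a \<in> cluster I D d \<Longrightarrow> b \<in> cluster I D d \<Longrightarrow>
      (\<Sum>i<card (cluster I D d). e i a * e i b) = (if a = b then 1 else 0)"
begin

abbreviation C :: "nat set" where "C \<equiv> cluster I D d"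

definition coeff :: "nat \<Rightarrow> (nat \<Rightarrow> complex) \<Rightarrow> complex"
  where "coeff i z = (\<Sum>a\<in>C. of_real (e i a) * z a)"

lemma coeff_lincomb: "coeff i (\<lambda>j. a * v j + b * w j) = a * coeff i v + b * coeff i w"
  unfolding coeff_def by (simp add: algebra_simps sum.distrib sum_distrib_left)

text \<open>Writing \<open>\<mu> = d (1 + \<epsilon> \<nu>)\<close>, the number \<open>\<nu>\<close> is the approximate eigenvalue of \<open>W\<close> on \<open>C\<close>.\<close>
definition rescaled_eigenvalue :: "real \<Rightarrow> complex \<Rightarrow> complex"
  where "rescaled_eigenvalue \<epsilon> \<mu> = (\<mu> / d - 1) / of_real \<epsilon>"

lemma C_subset: "C \<subseteq> I"
  unfolding cluster_def by auto

lemma finite_C: "finite C"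
  using finite_subset[OF C_subset finite_I] .

lemma C_nonempty: "C \<noteq> {}"
  using d_value unfolding cluster_def by auto

lemma d_nonzero: "d \<noteq> 0"
  using d_value norm_D by force

lemma e_bounded:
  assumes "i < card C" "a \<in> C"
  shows "\<bar>e i a\<bar> \<le> 1"
proof -
  have "(e i a)\<^sup>2 \<le> (\<Sum>i'<card C. (e i' a)\<^sup>2)"
    using assms(1) by (intro member_le_sum) auto
  also have "\<dots> = 1"
    using e_complete[OF assms(2) assms(2)] by (simp add: power2_eq_square)
  finally show ?thesis by (simp add: abs_square_le_1)
qed

lemma coeff_expansion:
  assumes "a \<in> C"
  shows "z a = (\<Sum>i<card C. coeff i z * of_real (e i a))"
proof -
  have "(\<Sum>i<card C. coeff i z * of_real (e i a)) = (\<Sum>i<card C. \<Sum>b\<in>C. of_real (e i b * e i a) * z b)"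
    unfolding coeff_def sum_distrib_right by (simp add: mult_ac)
  also have "\<dots> = (\<Sum>b\<in>C. of_real (\<Sum>i<card C. e i b * e i a) * z b)"
    by (subst sum.swap) (simp add: sum_distrib_right)
  also have "\<dots> = (\<Sum>b\<in>C. if b = a then z b else 0)"
    using e_complete assms by (intro sum.cong) auto
  also have "\<dots> = z a"
    using finite_C assms by simp
  finally show ?thesis by simp
qed

lemma perturbed_eigvec_on_cluster:
  assumes z: "perturbed_eigvec I D W \<epsilon> \<mu> z" and "0 < \<epsilon>" and "a \<in> C"
  shows "(\<Sum>b\<in>C. of_real (W a b) * z b)
    = rescaled_eigenvalue \<epsilon> \<mu> * z a - (\<Sum>j\<in>I - C. of_real (W a j) * z j)"
proof -
  let ?S = "\<Sum>j\<in>I. of_real (W a j) * z j"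
  have "a \<in> I" "D a = d" using \<open>a \<in> C\<close> unfolding cluster_def by auto
  then have "d * (z a + of_real \<epsilon> * ?S) = \<mu> * z a"
    using z unfolding perturbed_eigvec_def by auto
  then have "?S = rescaled_eigenvalue \<epsilon> \<mu> * z a"
    unfolding rescaled_eigenvalue_def using d_nonzero \<open>0 < \<epsilon>\<close> by (simp add: field_simps)
  moreover have "?S = (\<Sum>b\<in>C. of_real (W a b) * z b) + (\<Sum>j\<in>I - C. of_real (W a j) * z j)"
    using sum.subset_diff[OF C_subset finite_I] by (simp add: add.commute)
  ultimately show ?thesis by (simp add: algebra_simps)
qed

lemma coeff_equation:
  assumes z: "perturbed_eigvec I D W \<epsilon> \<mu> z" and "0 < \<epsilon>" and "i < card C"
  shows "(of_real (lam i) - rescaled_eigenvalue \<epsilon> \<mu>) * coeff i z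
    = - (\<Sum>a\<in>C. of_real (e i a) * (\<Sum>j\<in>I - C. of_real (W a j) * z j))"
proof -
  have "(\<Sum>a\<in>C. of_real (e i a) * (\<Sum>b\<in>C. of_real (W a b) * z b))
      = (\<Sum>b\<in>C. \<Sum>a\<in>C. of_real (e i a) * of_real (W a b) * z b)"
    unfolding sum_distrib_left by (subst sum.swap) (simp add: mult.assoc)
  also have "\<dots> = (\<Sum>b\<in>C. of_real (\<Sum>a\<in>C. W b a * e i a) * z b)"
  proof (rule sum.cong[OF refl])
    fix b assume "b \<in> C"
    then show "(\<Sum>a\<in>C. of_real (e i a) * of_real (W a b) * z b) = of_real (\<Sum>a\<in>C. W b a * e i a) * z b"
      using W_sym C_subset unfolding of_real_sum sum_distrib_right
      by (intro sum.cong) (auto simp: mult.commute subsetD)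
  qed
  also have "\<dots> = of_real (lam i) * coeff i z"
    using e_eigvec[OF \<open>i < card C\<close>] unfolding coeff_def by (simp add: sum_distrib_left mult_ac)
  finally have "of_real (lam i) * coeff i z
      = (\<Sum>a\<in>C. of_real (e i a) * (rescaled_eigenvalue \<epsilon> \<mu> * z a - (\<Sum>j\<in>I - C. of_real (W a j) * z j)))"
    using perturbed_eigvec_on_cluster[OF z \<open>0 < \<epsilon>\<close>] by simp
  also have "\<dots> = rescaled_eigenvalue \<epsilon> \<mu> * coeff i z - (\<Sum>a\<in>C. of_real (e i a) * (\<Sum>j\<in>I - C. of_real (W a j) * z j))"
    unfolding coeff_def by (simp add: algebra_simps sum_subtractf sum_distrib_left)
  finally show ?thesis by (simp add: algebra_simps)
qed

lemma coeff_defect_le: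
  assumes z: "perturbed_eigvec I D W \<epsilon> \<mu> z" and "0 < \<epsilon>" and "i < card C" and "0 \<le> B"
    and off: "\<And>j. j \<in> I \<Longrightarrow> D j \<noteq> d \<Longrightarrow> cmod (z j) \<le> B"
  shows "cmod ((of_real (lam i) - rescaled_eigenvalue \<epsilon> \<mu>) * coeff i z) \<le> real (card C) * Wnorm I W * B"
proof -
  have "cmod ((of_real (lam i) - rescaled_eigenvalue \<epsilon> \<mu>) * coeff i z)
      = cmod (\<Sum>a\<in>C. of_real (e i a) * (\<Sum>j\<in>I - C. of_real (W a j) * z j))"
    unfolding coeff_equation[OF z \<open>0 < \<epsilon>\<close> \<open>i < card C\<close>] by simp
  also have "\<dots> \<le> (\<Sum>a\<in>C. Wnorm I W * B)"
  proof (rule order.trans[OF norm_sum sum_mono])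
    fix a assume "a \<in> C"
    then have "cmod (\<Sum>j\<in>I - C. of_real (W a j) * z j) \<le> Wnorm I W * B"
      using C_subset off \<open>0 \<le> B\<close> by (intro norm_row_sum_le) (auto simp: cluster_def)
    then show "cmod (of_real (e i a) * (\<Sum>j\<in>I - C. of_real (W a j) * z j)) \<le> Wnorm I W * B"
      using e_bounded[OF \<open>i < card C\<close> \<open>a \<in> C\<close>] mult_mono[of "\<bar>e i a\<bar>" 1]
      by (simp add: norm_mult)
  qed
  finally show ?thesis by simp
qed

lemma norm_coeff_le:
  assumes z: "perturbed_eigvec I D W \<epsilon> \<mu> z" and "0 < \<epsilon>" and "0 \<le> B"
    and off: "\<And>j. j \<in> I \<Longrightarrow> D j \<noteq> d \<Longrightarrow> cmod (z j) \<le> B"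
    and "0 < g" and gap: "\<And>i j. i < card C \<Longrightarrow> j < card C \<Longrightarrow> i \<noteq> j \<Longrightarrow> g \<le> \<bar>lam i - lam j\<bar>"
    and "i0 < card C"
    and nearest: "\<And>i. i < card C \<Longrightarrow>
      cmod (of_real (lam i0) - rescaled_eigenvalue \<epsilon> \<mu>) \<le> cmod (of_real (lam i) - rescaled_eigenvalue \<epsilon> \<mu>)"
    and "coeff i0 z = 0" and "i < card C"
  shows "cmod (coeff i z) \<le> 2 * real (card C) * Wnorm I W * B / g"
proof (cases "i = i0")
  case True
  then show ?thesis using \<open>coeff i0 z = 0\<close> \<open>0 \<le> B\<close> \<open>0 < g\<close> Wnorm_ge_1[of I W] by simp
next
  case False
  let ?\<nu> = "rescaled_eigenvalue \<epsilon> \<mu>"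
  have "g \<le> cmod (of_real (lam i) - of_real (lam i0) :: complex)"
    using gap[OF \<open>i < card C\<close> \<open>i0 < card C\<close> False] by (metis norm_of_real of_real_diff)
  also have "\<dots> \<le> cmod (of_real (lam i) - ?\<nu>) + cmod (of_real (lam i0) - ?\<nu>)"
    using norm_triangle_ineq4[of "of_real (lam i) - ?\<nu>" "of_real (lam i0) - ?\<nu>"] by simp
  also have "\<dots> \<le> 2 * cmod (of_real (lam i) - ?\<nu>)"
    using nearest[OF \<open>i < card C\<close>] by simp
  finally have "g / 2 * cmod (coeff i z) \<le> cmod (of_real (lam i) - ?\<nu>) * cmod (coeff i z)"
    by (intro mult_right_mono) auto
  also have "\<dots> \<le> real (card C) * Wnorm I W * B"
    using coeff_defect_le[OF z \<open>0 < \<epsilon>\<close> \<open>i < card C\<close> \<open>0 \<le> B\<close> off] by (simp add: norm_mult)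
  finally show ?thesis
    using \<open>0 < g\<close> by (simp add: field_simps)
qed

lemma norm_on_cluster_le:
  fixes c :: real
  assumes coeff: "\<And>i. i < card C \<Longrightarrow> cmod (coeff i z) \<le> c" and "a \<in> C"
  shows "cmod (z a) \<le> real (card C) * c"
proof -
  have "cmod (z a) \<le> (\<Sum>i<card C. cmod (coeff i z * of_real (e i a)))"
    unfolding coeff_expansion[OF \<open>a \<in> C\<close>, of z] by (rule norm_sum)
  also have "\<dots> \<le> (\<Sum>i<card C. c)"
  proof (rule sum_mono)
    fix i assume "i \<in> {..<card C}"
    then have "cmod (coeff i z) * \<bar>e i a\<bar> \<le> c * 1"
      using coeff e_bounded \<open>a \<in> C\<close> by (intro mult_mono) (auto intro: order_trans[OF norm_ge_zero])
    then show "cmod (coeff i z * of_real (e i a)) \<le> c" by (simp add: norm_mult)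
  qed
  finally show ?thesis by simp
qed

text \<open>Off \<open>C\<close> the eigenvector is \<open>O(\<epsilon>)\<close> relative to its maximum, and by the spectral gap so are its
  components along all eigenvectors of \<open>W\<close> on \<open>C\<close> but the \<open>i0\<close>-th. So if that one vanishes,
  the maximum is at most half of itself.\<close>
lemma coeff_zero_imp_zero:
  assumes "0 < \<gamma>" and far: "\<And>i. i \<in> I \<Longrightarrow> D i \<noteq> d \<Longrightarrow> \<gamma> \<le> cmod (D i - d)"
    and "0 < g" and gap: "\<And>i j. i < card C \<Longrightarrow> j < card C \<Longrightarrow> i \<noteq> j \<Longrightarrow> g \<le> \<bar>lam i - lam j\<bar>"
    and "0 < \<epsilon>" and small1: "4 * \<epsilon> * Wnorm I W \<le> \<gamma>"
    and small2: "8 * \<epsilon> * (card C * Wnorm I W)\<^sup>2 \<le> g * \<gamma>"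
    and \<mu>: "cmod (\<mu> - d) \<le> \<epsilon> * Wnorm I W"
    and "i0 < card C"
    and nearest: "\<And>i. i < card C \<Longrightarrow>
      cmod (of_real (lam i0) - rescaled_eigenvalue \<epsilon> \<mu>) \<le> cmod (of_real (lam i) - rescaled_eigenvalue \<epsilon> \<mu>)"
    and z: "perturbed_eigvec I D W \<epsilon> \<mu> z" and "coeff i0 z = 0"
    and "j \<in> I"
  shows "z j = 0"
proof -
  let ?K = "Wnorm I W" and ?n = "real (card C)"
  obtain jm where "jm \<in> I" and max: "\<And>j. j \<in> I \<Longrightarrow> cmod (z j) \<le> cmod (z jm)"
    using finite_ex_maximizer[OF finite_I, of "\<lambda>j. cmod (z j)"] \<open>j \<in> I\<close> by blast
  define m where "m = cmod (z jm)"
  define B where "B = 2 * \<epsilon> * ?K * m / \<gamma>"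
  have "0 \<le> B" unfolding B_def m_def using \<open>0 < \<epsilon>\<close> \<open>0 < \<gamma>\<close> Wnorm_ge_1[of I W] by simp
  have off: "cmod (z i) \<le> B" if "i \<in> I" "D i \<noteq> d" for i
    unfolding B_def m_def
    using perturbed_eigvec_far_le[OF z _ \<open>0 < \<gamma>\<close> max \<mu> small1 that(1) far[OF that]] \<open>0 < \<epsilon>\<close>
    by simp
  have "B \<le> m / 2"
    using mult_right_mono[OF small1 norm_ge_zero[of "z jm"]] \<open>0 < \<gamma>\<close>
    unfolding B_def m_def by (simp add: field_simps)
  have "?n * (2 * ?n * ?K * B / g) = 4 * \<epsilon> * (?n * ?K)\<^sup>2 * m / (g * \<gamma>)"
    unfolding B_def by (simp add: field_simps power2_eq_square)
  also have "\<dots> \<le> m / 2"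
    using mult_right_mono[OF small2 norm_ge_zero[of "z jm"]] \<open>0 < g\<close> \<open>0 < \<gamma>\<close>
    unfolding m_def by (simp add: field_simps)
  finally have bound: "?n * (2 * ?n * ?K * B / g) \<le> m / 2" .
  have coeff_bound: "cmod (coeff i z) \<le> 2 * ?n * ?K * B / g" if "i < card C" for i
    using norm_coeff_le[OF z \<open>0 < \<epsilon>\<close> \<open>0 \<le> B\<close> off \<open>0 < g\<close> gap \<open>i0 < card C\<close> nearest \<open>coeff i0 z = 0\<close> that] .
  have half: "cmod (z i) \<le> m / 2" if "i \<in> I" for i
  proof (cases "D i = d")
    case True
    then have "i \<in> C" using that unfolding cluster_def by simp
    then have "cmod (z i) \<le> ?n * (2 * ?n * ?K * B / g)" by (intro norm_on_cluster_le coeff_bound)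
    with bound show ?thesis by linarith
  next
    case False
    with off[OF that] \<open>B \<le> m / 2\<close> show ?thesis by linarith
  qed
  have "m \<le> 0" using half[OF \<open>jm \<in> I\<close>] unfolding m_def by linarith
  then show ?thesis using max[OF \<open>j \<in> I\<close>] unfolding m_def by simp
qed

lemma diagonal_gap:
  obtains \<gamma> where "0 < \<gamma>" "\<And>i. i \<in> I \<Longrightarrow> D i \<noteq> d \<Longrightarrow> \<gamma> \<le> cmod (D i - d)"
proof (rule finite_positive_lower_bound[of "{i\<in>I. D i \<noteq> d}" "\<lambda>i. cmod (D i - d)"])
  show "finite {i\<in>I. D i \<noteq> d}" using finite_I by simp
qed (auto intro: that)

lemma spectral_gap:
  obtains g where "0 < g" "\<And>i j. i < card C \<Longrightarrow> j < card C \<Longrightarrow> i \<noteq> j \<Longrightarrow> g \<le> \<bar>lam i - lam j\<bar>"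
proof (rule finite_positive_lower_bound)
  show "finite ({..<card C} \<times> {..<card C} - Id)" by simp
  show "0 < \<bar>lam (fst p) - lam (snd p)\<bar>" if "p \<in> {..<card C} \<times> {..<card C} - Id" for p
    using that lam_inj by (auto dest: inj_onD)
qed (use that in auto)

lemma eventually_simple_eigenspaces_near:
  "\<forall>\<^sub>F \<epsilon> in at_right 0. simple_eigenspaces_near I D W \<epsilon> d"
proof -
  let ?K = "Wnorm I W" and ?n = "real (card C)"
  obtain \<gamma> where "0 < \<gamma>" and far: "\<And>i. i \<in> I \<Longrightarrow> D i \<noteq> d \<Longrightarrow> \<gamma> \<le> cmod (D i - d)"
    using diagonal_gap by blast
  obtain g where "0 < g" and gap: "\<And>i j. i < card C \<Longrightarrow> j < card C \<Longrightarrow> i \<noteq> j \<Longrightarrow> g \<le> \<bar>lam i - lam j\<bar>"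
    using spectral_gap by blast
  have "0 < card C" using finite_C C_nonempty by (simp add: card_gt_0_iff)
  define \<delta> where "\<delta> = min (\<gamma> / (4 * ?K)) (g * \<gamma> / (8 * (?n * ?K)\<^sup>2))"
  have "0 < \<delta>"
    unfolding \<delta>_def using \<open>0 < \<gamma>\<close> \<open>0 < g\<close> \<open>0 < card C\<close> Wnorm_ge_1[of I W] by simp
  show ?thesis
  proof (rule eventually_mono[OF eventually_at_right_real[OF \<open>0 < \<delta>\<close>]],
      unfold simple_eigenspaces_near_def, intro allI impI)
    fix \<epsilon> \<mu> v w
    assume "\<epsilon> \<in> {0<..<\<delta>}" and v: "perturbed_eigvec I D W \<epsilon> \<mu> v" and w: "perturbed_eigvec I D W \<epsilon> \<mu> w"
      and \<mu>: "cmod (\<mu> - d) \<le> \<epsilon> * ?K" and "\<exists>j\<in>I. v j \<noteq> 0"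
    then have "0 < \<epsilon>" "\<epsilon> \<le> \<gamma> / (4 * ?K)" "\<epsilon> \<le> g * \<gamma> / (8 * (?n * ?K)\<^sup>2)"
      unfolding \<delta>_def by auto
    then have small1: "4 * \<epsilon> * ?K \<le> \<gamma>" and small2: "8 * \<epsilon> * (?n * ?K)\<^sup>2 \<le> g * \<gamma>"
      using \<open>0 < card C\<close> Wnorm_ge_1[of I W] by (simp_all add: field_simps)
    let ?dist = "\<lambda>i. cmod (of_real (lam i) - rescaled_eigenvalue \<epsilon> \<mu>)"
    define i0 where "i0 = arg_min_on ?dist {..<card C}"
    have "i0 < card C" and nearest: "\<And>i. i < card C \<Longrightarrow> ?dist i0 \<le> ?dist i"
      using arg_min_if_finite[of "{..<card C}" ?dist] \<open>0 < card C\<close> unfolding i0_def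
      by (auto simp: not_less)
    have zero: "z j = 0" if "perturbed_eigvec I D W \<epsilon> \<mu> z" "coeff i0 z = 0" "j \<in> I" for z j
      by (rule coeff_zero_imp_zero[OF \<open>0 < \<gamma>\<close> far \<open>0 < g\<close> gap \<open>0 < \<epsilon>\<close> small1 small2 \<mu> \<open>i0 < card C\<close> nearest that])
    have "coeff i0 v \<noteq> 0"
      using zero[OF v] \<open>\<exists>j\<in>I. v j \<noteq> 0\<close> by blast
    define z where "z j = coeff i0 v * w j + (- coeff i0 w) * v j" for j
    have "perturbed_eigvec I D W \<epsilon> \<mu> z"
      unfolding z_def by (rule perturbed_eigvec_lincomb[OF w v])
    moreover have "coeff i0 z = 0"
      unfolding z_def coeff_lincomb by simp
    ultimately have "\<forall>i\<in>I. z i = 0"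
      using zero by blast
    then show "\<exists>a. \<forall>i\<in>I. w i = a * v i"
      using \<open>coeff i0 v \<noteq> 0\<close> by (intro exI[of _ "coeff i0 w / coeff i0 v"]) (auto simp: z_def field_simps)
  qed
qed

end

context unimodular_perturbation
begin

lemma simple_cluster_exists:
  assumes "d \<in> D ` I" and "card {x. is_eigenvalue_on (cluster I D d) W x} = card (cluster I D d)"
  obtains e lam where "simple_cluster I D W d e lam"
proof (rule symmetric_simple_spectrum_orthonormal_eigenbasis[of "cluster I D d" W])
  show "finite (cluster I D d)"
    using finite_I by (simp add: cluster_def)
  show "W a b = W b a" if "a \<in> cluster I D d" "b \<in> cluster I D d" for a b
    using W_sym that by (simp add: cluster_def)
  fix e lam
  assume "\<And>i a. i < card (cluster I D d) \<Longrightarrow> a \<in> cluster I D d \<Longrightarrow>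
      (\<Sum>b\<in>cluster I D d. W a b * e i b) = lam i * e i a"
    and "inj_on lam {..<card (cluster I D d)}"
    and "\<And>a b. a \<in> cluster I D d \<Longrightarrow> b \<in> cluster I D d \<Longrightarrow>
      (\<Sum>i<card (cluster I D d). e i a * e i b) = (if a = b then 1 else 0)"
  then have "simple_cluster I D W d e lam"
    using assms(1) by unfold_locales
  then show thesis by (rule that)
qed (rule assms(2))

lemma eventually_simple_eigenspaces:
  assumes simple: "\<And>d. d \<in> D ` I \<Longrightarrow> card {x. is_eigenvalue_on (cluster I D d) W x} = card (cluster I D d)"
  shows "\<forall>\<^sub>F \<epsilon> in at_right 0. simple_eigenspaces I D W \<epsilon>"
proof -
  have "\<forall>\<^sub>F \<epsilon> in at_right 0. \<forall>d\<in>D ` I. simple_eigenspaces_near I D W \<epsilon> d"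
  proof (rule eventually_ball_finite)
    show "finite (D ` I)" using finite_I by simp
    show "\<forall>d\<in>D ` I. \<forall>\<^sub>F \<epsilon> in at_right 0. simple_eigenspaces_near I D W \<epsilon> d"
    proof
      fix d assume "d \<in> D ` I"
      then obtain e lam where "simple_cluster I D W d e lam"
        using simple simple_cluster_exists by blast
      then interpret simple_cluster I D W d e lam .
      show "\<forall>\<^sub>F \<epsilon> in at_right 0. simple_eigenspaces_near I D W \<epsilon> d"
        by (rule eventually_simple_eigenspaces_near)
    qed
  qed
  then show ?thesis
    using eventually_at_right_less[of 0]
  proof (rule eventually_elim2, unfold simple_eigenspaces_def, intro allI impI)
    fix \<epsilon> :: real and \<mu> v w
    assume near: "\<forall>d\<in>D ` I. simple_eigenspaces_near I D W \<epsilon> d"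
      and "0 < \<epsilon>" and v: "perturbed_eigvec I D W \<epsilon> \<mu> v" and w: "perturbed_eigvec I D W \<epsilon> \<mu> w"
      and nonzero: "\<exists>j\<in>I. v j \<noteq> 0"
    obtain i where "i \<in> I" "cmod (\<mu> - D i) \<le> \<epsilon> * Wnorm I W"
      using perturbed_eigenvalue_near_diagonal[OF v _ nonzero] \<open>0 < \<epsilon>\<close> by auto
    then show "\<exists>a. \<forall>i\<in>I. w i = a * v i"
      using near v w nonzero unfolding simple_eigenspaces_near_def by blast
  qed
qed

end

subsection \<open>The band structure of \<open>D\<^sub>k\<^sub>,\<^sub>\<beta>\<^sub>,\<^sub>L\<close>\<close>

lemma Ncum_mono: "s \<le> t \<Longrightarrow> Ncum L s \<le> Ncum L t"
  unfolding Ncum_def by (intro sum_mono2) auto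

lemma Ncum_band_width: "band_width S N L \<Longrightarrow> Ncum L S = N"
  unfolding band_width_def Ncum_def by simp

lemma card_blk:
  assumes "1 \<le> s"
  shows "card (blk L s) = L s"
proof -
  obtain r where "s = Suc r" using assms by (cases s) auto
  then have "blk L s = {Ncum L r <.. Ncum L r + L s}"
    unfolding blk_def Ncum_def by auto
  then show ?thesis by simp
qed

lemma blk_subset:
  assumes "band_width S N L" "s \<in> {1..S}"
  shows "blk L s \<subseteq> {1..N}"
  using Ncum_mono[of s S L] Ncum_band_width[OF assms(1)] assms(2) unfolding blk_def by auto

lemma blk_cover:
  assumes "band_width S N L" "j \<in> {1..N}"
  obtains s where "s \<in> {1..S}" "j \<in> blk L s"
proof -
  define s where "s = (LEAST s. j \<le> Ncum L s)"
  have "j \<le> Ncum L S" using assms Ncum_band_width by auto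
  then have "j \<le> Ncum L s" "s \<le> S"
    unfolding s_def by (auto intro: LeastI Least_le)
  moreover have "s \<noteq> 0" using \<open>j \<le> Ncum L s\<close> assms(2) by (cases s) (auto simp: Ncum_def)
  moreover have "\<not> j \<le> Ncum L (s - 1)"
    using \<open>s \<noteq> 0\<close> unfolding s_def by (intro not_less_Least) (auto simp: s_def)
  ultimately show thesis by (intro that[of s]) (auto simp: blk_def)
qed

lemma blk_unique:
  assumes "j \<in> blk L s" "j \<in> blk L t" "1 \<le> s" "1 \<le> t"
  shows "s = t"
proof (rule ccontr)
  assume "s \<noteq> t"
  then have "Ncum L (min s t) \<le> Ncum L (max s t - 1)"
    by (intro Ncum_mono) auto
  with assms show False
    unfolding blk_def by (cases "s \<le> t") (auto simp: min_def max_def)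
qed

definition phase :: "nat \<Rightarrow> (nat \<Rightarrow> real) \<Rightarrow> nat \<Rightarrow> complex"
  where "phase k \<beta> s = exp (- 2 * of_real pi * \<i> * of_nat k * of_real (\<beta> s))"

lemma norm_phase: "cmod (phase k \<beta> s) = 1"
  unfolding phase_def by (simp add: norm_exp_eq_Re)

lemma phase_inj:
  assumes "\<beta> \<in> Gamma S" "k \<noteq> 0" "s \<in> {1..S}" "t \<in> {1..S}" "phase k \<beta> s = phase k \<beta> t"
  shows "s = t"
proof (rule ccontr)
  assume "s \<noteq> t"
  moreover have "int k \<noteq> 0" using assms(2) by simp
  ultimately have "exp (- 2 * of_real pi * \<i> * of_int (int k) * of_real (\<beta> s))
      \<noteq> exp (- 2 * of_real pi * \<i> * of_int (int k) * of_real (\<beta> t))"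
    using assms(1,3,4) unfolding Gamma_def by blast
  with assms(5) show False unfolding phase_def by simp
qed

lemma Ddiag_blk:
  assumes "s \<in> {1..S}" "j \<in> blk L s"
  shows "Ddiag S k \<beta> L j = phase k \<beta> s"
proof -
  have "j \<in> blk L t \<longleftrightarrow> t = s" if "t \<in> {1..S}" for t
    using blk_unique[of j L t s] assms that by auto
  then have "Ddiag S k \<beta> L j = (\<Sum>t=1..S. if t = s then phase k \<beta> t else 0)"
    unfolding Ddiag_def phase_def by (intro sum.cong) auto
  also have "\<dots> = phase k \<beta> s" using assms(1) by simp
  finally show ?thesis .
qed

lemma Ddiag_cluster:
  assumes bw: "band_width S N L" and "\<beta> \<in> Gamma S" and "s \<in> {1..S}"
  shows "cluster {1..N} (Ddiag S k \<beta> L) (phase k \<beta> s) = (if k = 0 then {1..N} else blk L s)"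
proof -
  have "Ddiag S k \<beta> L j = phase k \<beta> s \<longleftrightarrow> k = 0 \<or> j \<in> blk L s" if j: "j \<in> {1..N}" for j
  proof -
    obtain t where t: "t \<in> {1..S}" "j \<in> blk L t" using blk_cover[OF bw j] .
    then have "Ddiag S k \<beta> L j = phase k \<beta> t" by (rule Ddiag_blk)
    moreover have "j \<in> blk L s \<longleftrightarrow> t = s"
      using blk_unique[of j L t s] t \<open>s \<in> {1..S}\<close> by auto
    ultimately show ?thesis
      using phase_inj[OF \<open>\<beta> \<in> Gamma S\<close> _ t(1) \<open>s \<in> {1..S}\<close>] by (auto simp: phase_def)
  qed
  then show ?thesis
    using blk_subset[OF bw \<open>s \<in> {1..S}\<close>] unfolding cluster_def by auto
qed

lemma admissible_clusters_simple:
  assumes bw: "band_width S N L" and adm: "admissible S N L Wd" and "\<beta> \<in> Gamma S"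
    and "d \<in> Ddiag S k \<beta> L ` {1..N}"
  shows "card {x. is_eigenvalue_on (cluster {1..N} (Ddiag S k \<beta> L) d) Wd x}
    = card (cluster {1..N} (Ddiag S k \<beta> L) d)"
proof -
  obtain j where "j \<in> {1..N}" "d = Ddiag S k \<beta> L j" using assms(4) by auto
  moreover obtain s where s: "s \<in> {1..S}" "j \<in> blk L s" using blk_cover[OF bw \<open>j \<in> {1..N}\<close>] .
  ultimately have "cluster {1..N} (Ddiag S k \<beta> L) d = (if k = 0 then {1..N} else blk L s)"
    using Ddiag_blk[OF s] Ddiag_cluster[OF bw \<open>\<beta> \<in> Gamma S\<close> s(1)] by simp
  then show ?thesis
    using adm s(1) card_blk[of s L] unfolding admissible_def by auto
qed

lemma unimodular_perturbation_Ddiag: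
  assumes bw: "band_width S N L" and adm: "admissible S N L Wd"
  shows "unimodular_perturbation {1..N} (Ddiag S k \<beta> L) Wd"
proof
  show "cmod (Ddiag S k \<beta> L i) = 1" if i: "i \<in> {1..N}" for i
  proof -
    obtain s where "s \<in> {1..S}" "i \<in> blk L s" using blk_cover[OF bw i] .
    then show ?thesis using Ddiag_blk norm_phase by metis
  qed
qed (use adm in \<open>auto simp: admissible_def\<close>)

lemma Pmat_eigvec:
  assumes "\<forall>i\<in>{1..N}. (\<Sum>j=1..N. Pmat S k \<beta> L Wd \<epsilon> i j * v j) = \<mu> * v i"
  shows "perturbed_eigvec {1..N} (Ddiag S k \<beta> L) Wd \<epsilon> \<mu> v"
  unfolding perturbed_eigvec_def
proof
  fix i assume "i \<in> {1..N}"
  have "(\<Sum>j=1..N. Pmat S k \<beta> L Wd \<epsilon> i j * v j)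
     = (\<Sum>j=1..N. Ddiag S k \<beta> L i * ((if i = j then v j else 0) + of_real \<epsilon> * (of_real (Wd i j) * v j)))"
    unfolding Pmat_def by (intro sum.cong refl) (simp add: algebra_simps)
  also have "\<dots> = Ddiag S k \<beta> L i *
      ((\<Sum>j=1..N. if i = j then v j else 0) + of_real \<epsilon> * (\<Sum>j=1..N. of_real (Wd i j) * v j))"
    by (simp only: distrib_left sum.distrib sum_distrib_left)
  also have "(\<Sum>j=1..N. if i = j then v j else 0) = v i"
    using \<open>i \<in> {1..N}\<close> by simp
  finally show "Ddiag S k \<beta> L i * (v i + of_real \<epsilon> * (\<Sum>j\<in>{1..N}. of_real (Wd i j) * v j)) = \<mu> * v i"
    using assms \<open>i \<in> {1..N}\<close> by simp
qed

lemma unit_eigenbasis_nonzero: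
  assumes "unit_eigenbasis N A f" "l \<in> {1..N}"
  shows "\<exists>j\<in>{1..N}. f l j \<noteq> 0"
proof (rule ccontr)
  assume "\<not> (\<exists>j\<in>{1..N}. f l j \<noteq> 0)"
  then have "(\<Sum>j=1..N. (cmod (f l j))\<^sup>2) = 0" by simp
  with assms show False unfolding unit_eigenbasis_def by auto
qed

lemma unit_eigenbasis_not_parallel:
  assumes basis: "unit_eigenbasis N A f" and "l \<in> {1..N}" "m \<in> {1..N}" "l \<noteq> m"
  shows "\<not> (\<forall>i\<in>{1..N}. f m i = a * f l i)"
proof
  assume parallel: "\<forall>i\<in>{1..N}. f m i = a * f l i"
  define c where "c x = (if x = l then a else if x = m then -1 else 0)" for x
  have "(\<Sum>x=1..N. c x * f x j) = 0" if "j \<in> {1..N}" for j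
  proof -
    have "(\<Sum>x=1..N. c x * f x j) = (\<Sum>x=1..N. (if x = l then a * f l j else 0) + (if x = m then - f m j else 0))"
      unfolding c_def using \<open>l \<noteq> m\<close> by (intro sum.cong) auto
    also have "\<dots> = a * f l j - f m j"
      using \<open>l \<in> {1..N}\<close> \<open>m \<in> {1..N}\<close> by (simp add: sum.distrib)
    finally show ?thesis using parallel that by simp
  qed
  then have "c m = 0"
    using basis \<open>m \<in> {1..N}\<close> unfolding unit_eigenbasis_def by blast
  with \<open>l \<noteq> m\<close> show False unfolding c_def by simp
qed

lemma Pmat_unit_eigenbasis_biorthogonal:
  assumes bw: "band_width S N L" and adm: "admissible S N L Wd"
    and simple: "simple_eigenspaces {1..N} (Ddiag S k \<beta> L) Wd \<epsilon>"
    and basis: "unit_eigenbasis N (Pmat S k \<beta> L Wd \<epsilon>) f"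
    and "l \<in> {1..N}" "m \<in> {1..N}" "l \<noteq> m"
  shows "cinner N (f l) (\<lambda>j. Ddiag S k \<beta> L j * cnj (f m j)) = 0"
proof -
  interpret unimodular_perturbation "{1..N}" "Ddiag S k \<beta> L" Wd
    using bw adm by (rule unimodular_perturbation_Ddiag)
  obtain \<mu>l \<mu>m where l: "perturbed_eigvec {1..N} (Ddiag S k \<beta> L) Wd \<epsilon> \<mu>l (f l)"
    and m: "perturbed_eigvec {1..N} (Ddiag S k \<beta> L) Wd \<epsilon> \<mu>m (f m)"
    using basis \<open>l \<in> {1..N}\<close> \<open>m \<in> {1..N}\<close> Pmat_eigvec unfolding unit_eigenbasis_def by meson
  have "\<mu>l \<noteq> \<mu>m"
    using simple l m unit_eigenbasis_nonzero[OF basis \<open>l \<in> {1..N}\<close>]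
      unit_eigenbasis_not_parallel[OF basis \<open>l \<in> {1..N}\<close> \<open>m \<in> {1..N}\<close> \<open>l \<noteq> m\<close>]
    unfolding simple_eigenspaces_def by blast
  then show ?thesis
    using perturbed_eigvecs_biorthogonal[OF l m] unfolding cinner_def by simp
qed

theorem lemma4p3:
  fixes S N k :: nat and L :: "nat \<Rightarrow> nat" and Wd :: "nat \<Rightarrow> nat \<Rightarrow> real"
    and \<beta> :: "nat \<Rightarrow> real" and f :: "real \<Rightarrow> nat \<Rightarrow> nat \<Rightarrow> complex"
  assumes "1 < S" and "S \<le> N"
    and "band_width S N L"
    and "admissible S N L Wd"
    and "\<beta> \<in> Gamma S"
    and "eventually (\<lambda>\<epsilon>. unit_eigenbasis N (Pmat S k \<beta> L Wd \<epsilon>) (f \<epsilon>)) (at_right 0)"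
  shows "\<forall>l\<in>{1..N}. \<forall>m\<in>{1..N}. l \<noteq> m \<longrightarrow>
           eventually (\<lambda>\<epsilon>. cinner N (f \<epsilon> l) (\<lambda>j. Ddiag S k \<beta> L j * cnj (f \<epsilon> m j)) = 0)
             (at_right 0)"
proof (intro ballI impI)
  fix l m assume "l \<in> {1..N}" "m \<in> {1..N}" "l \<noteq> m"
  interpret unimodular_perturbation "{1..N}" "Ddiag S k \<beta> L" Wd
    using assms(3,4) by (rule unimodular_perturbation_Ddiag)
  have "\<forall>\<^sub>F \<epsilon> in at_right 0. simple_eigenspaces {1..N} (Ddiag S k \<beta> L) Wd \<epsilon>"
    using admissible_clusters_simple[OF assms(3-5)] by (rule eventually_simple_eigenspaces)
  then show "\<forall>\<^sub>F \<epsilon> in at_right 0. cinner N (f \<epsilon> l) (\<lambda>j. Ddiag S k \<beta> L j * cnj (f \<epsilon> m j)) = 0"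
    using assms(6) by (rule eventually_elim2)
      (rule Pmat_unit_eigenbasis_biorthogonal[OF assms(3,4) _ _ \<open>l \<in> {1..N}\<close> \<open>m \<in> {1..N}\<close> \<open>l \<noteq> m\<close>])
qed

end
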